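(* Let $d\ge 2$, let $\mathcal{V}\subset\mathbb{R}^d$ be a finite vertex set in general position, and let $\tau$ be the Delaunay mesh of $\mathcal{V}$. Let $Q=\{v_1,\ldots,v_m\}\subset\mathcal{V}$ with $m\ge d$ (in the application, $Q$ consists of interface vertices of a mesh interface $\Gamma_\tau$) such that the closed ball bounded by the minimum covering sphere of $Q$ contains no vertex of $\mathcal{V}$ other than $v_1,\ldots,v_m$. Then for any two vertices $p_1,p_2\in\mathcal{V}\setminus Q$: if the segment $\overline{p_1p_2}$ intersects $\operatorname{conv}(Q)$, then $\overline{p_1p_2}$ is not an edge of the Delaunay mesh $\tau$.
   Context: A mesh of $\Omega=\operatorname{conv}(\mathcal{V})$ is a partition of $\Omega$ into nondegenerate $d$-simplices with vertices in $\mathcal{V}$; an edge of a simplex is the segment between two of its vertices. The Delaunay mesh $\tau(\mathcal{V})$ is the (unique, under general position) mesh such that the circumsphere of each cell contains no vertex of $\mathcal{V}$ in its interior other than the cell's own vertices. The minimum covering sphere of a non-empty finite set $Q$ is the smallest sphere such that every point of $Q$ lies inside it or on it. A finite point set in $\mathbb{R}^d$ is in general position if for each $i=1,\ldots,d$ no $i+1$ of its points lie in an affine subspace of dimension $i-1$, and no $d+2$ of its points lie on a common sphere. A mesh interface $\Gamma_\tau$ is a $(d-1)$-dimensional mesh formed by $(d-1)$-dimensional facets of cells of $\tau$ forming a surface in $\mathbb{R}^d$; its vertices are called interface vertices. *)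

theory Defs
  imports "HOL-Analysis.Analysis"
begin

definition general_position :: "'a::euclidean_space set \<Rightarrow> bool" where
  "general_position V \<longleftrightarrow>
     (\<forall>i\<in>{1..DIM('a)}. \<forall>S\<subseteq>V. card S = i + 1 \<longrightarrow> \<not> aff_dim S \<le> int i - 1) \<and>
     (\<forall>S\<subseteq>V. card S = DIM('a) + 2 \<longrightarrow> \<not> (\<exists>c r. \<forall>x\<in>S. dist c x = r))"

definition nondeg_simplex :: "'a::euclidean_space set \<Rightarrow> bool" where
  "nondeg_simplex T \<longleftrightarrow> card T = DIM('a) + 1 \<and> \<not> affine_dependent T"

definition is_mesh :: "'a::euclidean_space set \<Rightarrow> 'a set set \<Rightarrow> bool" where
  "is_mesh V \<tau> \<longleftrightarrow> finite \<tau> \<and>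
     (\<forall>T\<in>\<tau>. T \<subseteq> V \<and> nondeg_simplex T) \<and>
     (\<Union>T\<in>\<tau>. convex hull T) = convex hull V \<and>
     (\<forall>T1\<in>\<tau>. \<forall>T2\<in>\<tau>. T1 \<noteq> T2 \<longrightarrow>
        interior (convex hull T1) \<inter> interior (convex hull T2) = {})"

definition delaunay_mesh :: "'a::euclidean_space set \<Rightarrow> 'a set set \<Rightarrow> bool" where
  "delaunay_mesh V \<tau> \<longleftrightarrow> is_mesh V \<tau> \<and>
     (\<forall>T\<in>\<tau>. \<exists>c r. (\<forall>x\<in>T. dist c x = r) \<and>
                    (\<forall>v\<in>V - T. \<not> dist c v < r))"

definition is_edge :: "'a set set \<Rightarrow> 'a \<Rightarrow> 'a \<Rightarrow> bool" where
  "is_edge \<tau> p1 p2 \<longleftrightarrow> p1 \<noteq> p2 \<and> (\<exists>T\<in>\<tau>. p1 \<in> T \<and> p2 \<in> T)"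

definition min_covering_ball :: "'a::metric_space set \<Rightarrow> 'a \<Rightarrow> real \<Rightarrow> bool" where
  "min_covering_ball Q c r \<longleftrightarrow> Q \<subseteq> cball c r \<and>
     (\<forall>c' r'. Q \<subseteq> cball c' r' \<longrightarrow> r \<le> r')"

end

theory Submission
  imports Defs
begin

text \<open>The difference of the powers of a point with respect to two spheres is an affine
function of the point, so the locus where one power does not exceed the other is a closed
halfspace bounded by the radical hyperplane. The circumsphere of a Delaunay cell
containing the edge \<open>p\<^sub>1p\<^sub>2\<close> has no vertex inside, so every point of \<open>Q\<close> has
nonnegative power with respect to it but nonpositive power with respect to the covering
ball, while \<open>p\<^sub>1, p\<^sub>2\<close> lie on the circumsphere and outside the covering ball. Hence the
radical hyperplane strictly separates the segment from \<open>conv(Q)\<close>.\<close>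

definition sphere_power :: "'a::real_inner \<Rightarrow> real \<Rightarrow> 'a \<Rightarrow> real" where
  "sphere_power c r y = (dist y c)\<^sup>2 - r\<^sup>2"

lemma sphere_power_diff_affine:
  fixes c c' y :: "'a::real_inner"
  shows "sphere_power c r y - sphere_power c' r' y
           = 2 * ((c' - c) \<bullet> y) + (c \<bullet> c - c' \<bullet> c' - r\<^sup>2 + r'\<^sup>2)"
  by (simp add: sphere_power_def dist_norm power2_norm_eq_inner inner_diff_left
      inner_diff_right inner_commute algebra_simps)

lemma convex_sphere_power_le:
  "convex {y::'a::real_inner. sphere_power c r y \<le> sphere_power c' r' y}"
proof -
  have "{y. sphere_power c r y \<le> sphere_power c' r' y}
          = {y. (c' - c) \<bullet> y \<le> - (c \<bullet> c - c' \<bullet> c' - r\<^sup>2 + r'\<^sup>2) / 2}"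
  proof (rule Collect_cong)
    fix y
    show "sphere_power c r y \<le> sphere_power c' r' y
            \<longleftrightarrow> (c' - c) \<bullet> y \<le> - (c \<bullet> c - c' \<bullet> c' - r\<^sup>2 + r'\<^sup>2) / 2"
      using sphere_power_diff_affine[of c r y c' r'] by argo
  qed
  then show ?thesis by (simp only: convex_halfspace_le)
qed

lemma convex_sphere_power_gt:
  "convex {y::'a::real_inner. sphere_power c r y > sphere_power c' r' y}"
proof -
  have "{y. sphere_power c r y > sphere_power c' r' y}
          = {y. (c' - c) \<bullet> y > - (c \<bullet> c - c' \<bullet> c' - r\<^sup>2 + r'\<^sup>2) / 2}"
  proof (rule Collect_cong)
    fix y
    show "sphere_power c r y > sphere_power c' r' y
            \<longleftrightarrow> (c' - c) \<bullet> y > - (c \<bullet> c - c' \<bullet> c' - r\<^sup>2 + r'\<^sup>2) / 2"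
      using sphere_power_diff_affine[of c r y c' r'] by argo
  qed
  then show ?thesis by (simp only: convex_halfspace_gt)
qed

lemma closed_segment_disjoint_hull_by_radical_hyperplane:
  fixes c c' p\<^sub>1 p\<^sub>2 :: "'a::real_inner"
  assumes Q_covered: "Q \<subseteq> cball c r" and Q_outside: "Q \<inter> ball c' r' = {}"
    and ends: "{p\<^sub>1, p\<^sub>2} \<subseteq> sphere c' r' - cball c r"
  shows "closed_segment p\<^sub>1 p\<^sub>2 \<inter> convex hull Q = {}"
proof (cases "Q = {}")
  case False
  then have r_nonneg: "r \<ge> 0"
    using Q_covered by (meson dual_order.trans ex_in_conv mem_cball subsetD zero_le_dist)
  have r'_nonneg: "r' \<ge> 0"
    using ends by auto
  have "Q \<subseteq> {y. sphere_power c r y \<le> sphere_power c' r' y}"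
  proof
    fix q assume "q \<in> Q"
    then have "dist q c \<le> r" "r' \<le> dist q c'"
      using Q_covered Q_outside by (auto simp: dist_commute)
    then have "(dist q c)\<^sup>2 \<le> r\<^sup>2" "r'\<^sup>2 \<le> (dist q c')\<^sup>2"
      using r'_nonneg by (auto intro: power_mono)
    then show "q \<in> {y. sphere_power c r y \<le> sphere_power c' r' y}"
      by (simp add: sphere_power_def)
  qed
  then have "convex hull Q \<subseteq> {y. sphere_power c r y \<le> sphere_power c' r' y}"
    by (rule hull_minimal) (rule convex_sphere_power_le)
  moreover have "closed_segment p\<^sub>1 p\<^sub>2 \<subseteq> {y. sphere_power c r y > sphere_power c' r' y}"
  proof (rule closed_segment_subset)
    have "sphere_power c r p > sphere_power c' r' p" if "p \<in> {p\<^sub>1, p\<^sub>2}" for p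
    proof -
      have "r < dist p c" "dist p c' = r'"
        using that ends by (auto simp: dist_commute)
      then show ?thesis
        using r_nonneg by (simp add: sphere_power_def power_strict_mono)
    qed
    then show "p\<^sub>1 \<in> {y. sphere_power c r y > sphere_power c' r' y}"
      and "p\<^sub>2 \<in> {y. sphere_power c r y > sphere_power c' r' y}"
      by auto
  qed (rule convex_sphere_power_gt)
  ultimately show ?thesis
    by fastforce
qed simp

theorem mainTheorem2:
  fixes V Q :: "'a::euclidean_space set" and \<tau> :: "'a set set"
    and c p1 p2 :: 'a and r :: real
  assumes "DIM('a) \<ge> 2"
    and "finite V"
    and "general_position V"
    and "delaunay_mesh V \<tau>"
    and "Q \<subseteq> V" and "card Q \<ge> DIM('a)"
    and "min_covering_ball Q c r"
    and "V \<inter> cball c r \<subseteq> Q"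
    and "p1 \<in> V - Q" and "p2 \<in> V - Q"
    and "closed_segment p1 p2 \<inter> convex hull Q \<noteq> {}"
  shows "\<not> is_edge \<tau> p1 p2"
proof
  assume "is_edge \<tau> p1 p2"
  then obtain T where T: "T \<in> \<tau>" "p1 \<in> T" "p2 \<in> T"
    unfolding is_edge_def by blast
  then obtain c' r' where on_sphere: "\<forall>x\<in>T. dist c' x = r'"
    and empty: "\<forall>v\<in>V - T. \<not> dist c' v < r'"
    using assms(4) unfolding delaunay_mesh_def by blast
  have "Q \<subseteq> cball c r"
    using assms(7) unfolding min_covering_ball_def by blast
  moreover have "Q \<inter> ball c' r' = {}"
    using on_sphere empty assms(5) by fastforce
  moreover have "{p1, p2} \<subseteq> sphere c' r' - cball c r"
    using T on_sphere assms(8-10) by auto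
  ultimately have "closed_segment p1 p2 \<inter> convex hull Q = {}"
    by (rule closed_segment_disjoint_hull_by_radical_hyperplane)
  with assms(11) show False ..
qed

end
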